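(* Let $M$ and $M'$ be sets of equatorial measurement angles in $[0,\pi)$ with $|M|,|M'|\ge2$, and let $U$ be a single-qubit unitary such that $UMU^\dagger=M'$ modulo $\pi$, i.e. for every $\varphi\in M$ there is $\varphi'$ with $UE_\varphi U^\dagger=\pm E_{\varphi'}$, and $\{\varphi'\bmod\pi:\varphi\in M\}=M'$. Then, up to a global phase, $U=X^aP_\theta$ for some $\theta\in[0,2\pi)$ and $a\in\{0,1\}$, where $P_\theta=\mathrm{diag}(1,e^{i\theta})$ is the phase gate.
   Context: For $\varphi\in\mathbb{R}$, the equatorial measurement with angle $\varphi$ is the observable $E_\varphi=\cos\varphi\,X+\sin\varphi\,Y$, where $X,Y$ are Pauli matrices; note $E_{\varphi+\pi}=-E_\varphi$. *)

theory Defs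
  imports "HOL-Analysis.Analysis"
begin

type_synonym qmat = "complex ^ 2 ^ 2"

definition mat2 :: "complex \<Rightarrow> complex \<Rightarrow> complex \<Rightarrow> complex \<Rightarrow> qmat" where
  "mat2 a b c d = (\<chi> i j. if i = 0 then (if j = 0 then a else b) else (if j = 0 then c else d))"

definition pauliX :: qmat where "pauliX = mat2 0 1 1 0"
definition pauliY :: qmat where "pauliY = mat2 0 (- \<i>) \<i> 0"

definition adj :: "qmat \<Rightarrow> qmat" where
  "adj U = (\<chi> i j. cnj (U $ j $ i))"

definition unitary :: "qmat \<Rightarrow> bool" where
  "unitary U \<longleftrightarrow> adj U ** U = mat 1 \<and> U ** adj U = mat 1"

definition cscale :: "complex \<Rightarrow> qmat \<Rightarrow> qmat" where
  "cscale c A = (\<chi> i j. c * A $ i $ j)"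

definition Eq :: "real \<Rightarrow> qmat" where
  "Eq \<phi> = (\<chi> i j. complex_of_real (cos \<phi>) * pauliX $ i $ j + complex_of_real (sin \<phi>) * pauliY $ i $ j)"

definition phase_gate :: "real \<Rightarrow> qmat" where
  "phase_gate \<theta> = mat2 1 0 0 (exp (\<i> * complex_of_real \<theta>))"

definition mod_pi :: "real \<Rightarrow> real" where
  "mod_pi x = x - pi * of_int \<lfloor>x / pi\<rfloor>"

end

theory Submission
  imports Defs
begin

text \<open>Write \<open>U = mat2 p q r s\<close>. The diagonal entry \<open>(U E\<^sub>\<phi> U\<^sup>\<dagger>)\<^sub>0\<^sub>0\<close> equals
  \<open>2 Re (cnj p * q * cis \<phi>)\<close>, and it must vanish because \<open>\<plusminus>E\<^sub>\<phi>\<^sub>'\<close> has zero diagonal.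
  Vanishing for two distinct angles of \<open>[0, \<pi>)\<close> forces \<open>cnj p * q = 0\<close>, and unitarity then makes \<open>U\<close>
  diagonal or antidiagonal with unimodular entries, that is a phase times \<open>P\<^sub>\<theta>\<close> or \<open>X P\<^sub>\<theta>\<close>.\<close>

lemma UNIV_2_eq: "(UNIV :: 2 set) = {0, 1}"
proof -
  have "(2 :: 2) = 0"
    by simp
  with UNIV_2 show ?thesis
    by (simp add: insert_commute)
qed

lemma sum_UNIV_2: "sum f (UNIV :: 2 set) = f 0 + f 1"
  by (simp add: UNIV_2_eq)

lemma all_2: "(\<forall>i :: 2. P i) \<longleftrightarrow> P 0 \<and> P 1"
  by (metis UNIV_2_eq UNIV_I insertE singletonD)

lemma qmat_mat2_cases:
  obtains p q r s where "U = mat2 p q r s"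
proof
  show "U = mat2 (U $ 0 $ 0) (U $ 0 $ 1) (U $ 1 $ 0) (U $ 1 $ 1)"
    unfolding mat2_def by (simp add: vec_eq_iff all_2)
qed

lemma mat2_eq_iff: "mat2 a b c d = mat2 a' b' c' d' \<longleftrightarrow> a = a' \<and> b = b' \<and> c = c' \<and> d = d'"
  unfolding mat2_def by (auto simp add: vec_eq_iff all_2)

lemma mat2_mult: "mat2 a b c d ** mat2 e f g h = mat2 (a*e + b*g) (a*f + b*h) (c*e + d*g) (c*f + d*h)"
  unfolding mat2_def matrix_matrix_mult_def by (simp add: vec_eq_iff all_2 sum_UNIV_2)

lemma adj_mat2: "adj (mat2 a b c d) = mat2 (cnj a) (cnj c) (cnj b) (cnj d)"
  unfolding mat2_def adj_def by (simp add: vec_eq_iff all_2)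

lemma mat_1_eq_mat2: "mat 1 = mat2 1 0 0 1"
  unfolding mat2_def mat_def by (simp add: vec_eq_iff all_2)

lemma cscale_mat2: "cscale k (mat2 a b c d) = mat2 (k*a) (k*b) (k*c) (k*d)"
  unfolding mat2_def cscale_def by (simp add: vec_eq_iff all_2)

lemma Eq_eq_mat2: "Eq \<phi> = mat2 0 (cnj (cis \<phi>)) (cis \<phi>) 0"
  unfolding Eq_def pauliX_def pauliY_def mat2_def
  by (simp add: vec_eq_iff all_2 complex_eq_iff)

lemma Eq_00 [simp]: "Eq \<phi> $ 0 $ 0 = 0"
  by (simp add: Eq_eq_mat2 mat2_def)

lemma conj_Eq_00:
  "(mat2 p q r s ** Eq \<phi> ** adj (mat2 p q r s)) $ 0 $ 0 = of_real (2 * Re (cnj p * q * cis \<phi>))"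
proof -
  have "(mat2 p q r s ** Eq \<phi> ** adj (mat2 p q r s)) $ 0 $ 0
      = cnj p * q * cis \<phi> + cnj (cnj p * q * cis \<phi>)"
    unfolding Eq_eq_mat2 adj_mat2 mat2_mult by (simp add: mat2_def algebra_simps)
  also have "\<dots> = of_real (2 * Re (cnj p * q * cis \<phi>))"
    by (rule complex_add_cnj)
  finally show ?thesis .
qed

lemma conj_Eq_eq_pm_Eq_imp_Re_eq_0:
  assumes "mat2 p q r s ** Eq \<phi> ** adj (mat2 p q r s) \<in> {Eq \<psi>, - Eq \<psi>}"
  shows "Re (cnj p * q * cis \<phi>) = 0"
proof -
  have "(mat2 p q r s ** Eq \<phi> ** adj (mat2 p q r s)) $ 0 $ 0 = 0"
    using assms by (auto simp: vector_uminus_component)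
  then have "complex_of_real (2 * Re (cnj p * q * cis \<phi>)) = 0"
    unfolding conj_Eq_00 .
  then show ?thesis
    by (simp only: of_real_eq_0_iff)
qed

lemma cmod_eq_1_iff_cnj_mult: "cmod z = 1 \<longleftrightarrow> cnj z * z = 1"
proof -
  have "cnj z * z = of_real (cmod z ^ 2)"
    by (simp only: complex_norm_square mult.commute)
  moreover have "cmod z = 1 \<longleftrightarrow> cmod z ^ 2 = 1"
    using power2_eq_iff_nonneg[of "cmod z" 1] by simp
  ultimately show ?thesis
    by (metis of_real_eq_1_iff)
qed

lemma sin_diff_neq_0:
  assumes "a \<in> {0..<pi}" and "b \<in> {0..<pi}" and "a \<noteq> b"
  shows "sin (a - b) \<noteq> 0"
  using assms sin_eq_0_pi[of "a - b"] by auto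

lemma Re_mult_cis_eq_0_imp_eq_0:
  fixes z :: complex
  assumes "sin (a - b) \<noteq> 0" and "Re (z * cis a) = 0" and "Re (z * cis b) = 0"
  shows "z = 0"
proof -
  have det: "sin a * cos b - cos a * sin b \<noteq> 0"
    using assms(1) by (simp add: sin_diff)
  have ea: "Re z * cos a - Im z * sin a = 0" and eb: "Re z * cos b - Im z * sin b = 0"
    using assms(2,3) by simp_all
  \<comment> \<open>Cramer's rule for the homogeneous system in \<open>Re z\<close>, \<open>Im z\<close>.\<close>
  have "Re z * (sin a * cos b - cos a * sin b)
      = sin a * (Re z * cos b - Im z * sin b) - sin b * (Re z * cos a - Im z * sin a)"
    by (simp add: algebra_simps)
  also have "\<dots> = 0"
    by (simp add: ea eb)
  finally have "Re z = 0"
    using det by simp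
  have "Im z * (sin a * cos b - cos a * sin b)
      = cos a * (Re z * cos b - Im z * sin b) - cos b * (Re z * cos a - Im z * sin a)"
    by (simp add: algebra_simps)
  also have "\<dots> = 0"
    by (simp add: ea eb)
  finally have "Im z = 0"
    using det by simp
  with \<open>Re z = 0\<close> show ?thesis
    by (simp add: complex_eq_iff)
qed

lemma unitary_mat2_diag_or_antidiag:
  assumes "unitary (mat2 p q r s)" and "cnj p * q = 0"
  shows "q = 0 \<and> r = 0 \<and> cmod p = 1 \<and> cmod s = 1 \<or> p = 0 \<and> s = 0 \<and> cmod q = 1 \<and> cmod r = 1"
proof -
  have "adj (mat2 p q r s) ** mat2 p q r s = mat 1"
    using assms(1) unfolding unitary_def by simp
  then have col1: "cnj p * p + cnj r * r = 1" and col12: "cnj p * q + cnj r * s = 0"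
    and col2: "cnj q * q + cnj s * s = 1"
    unfolding adj_mat2 mat2_mult mat_1_eq_mat2 mat2_eq_iff by auto
  show ?thesis
  proof (cases "p = 0")
    case True
    with col1 col12 have "cnj r * r = 1" and "s = 0"
      by auto
    with col2 True show ?thesis
      by (simp add: cmod_eq_1_iff_cnj_mult)
  next
    case False
    with assms(2) col2 col12 have "q = 0" and "cnj s * s = 1" and "r = 0"
      by auto
    with col1 show ?thesis
      by (simp add: cmod_eq_1_iff_cnj_mult)
  qed
qed

lemma mat2_diag_eq_phase_gate:
  assumes "cmod p = 1" and "cmod s = 1"
  shows "mat2 p 0 0 s = cscale p (mat 1 ** phase_gate (Arg2pi (s / p)))"
proof -
  have "exp (\<i> * of_real (Arg2pi (s / p))) = s / p"
    using assms by (simp add: complex_norm_eq_1_exp[symmetric] norm_divide)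
  with assms show ?thesis
    by (auto simp: phase_gate_def mat_1_eq_mat2 mat2_mult cscale_mat2)
qed

lemma mat2_antidiag_eq_pauliX_phase_gate:
  assumes "cmod q = 1" and "cmod r = 1"
  shows "mat2 0 q r 0 = cscale r (pauliX ** phase_gate (Arg2pi (q / r)))"
proof -
  have "exp (\<i> * of_real (Arg2pi (q / r))) = q / r"
    using assms by (simp add: complex_norm_eq_1_exp[symmetric] norm_divide)
  with assms show ?thesis
    by (auto simp: phase_gate_def pauliX_def mat2_mult cscale_mat2)
qed

lemma unitary_mat2_eq_phase_pauliX_phase_gate:
  assumes "unitary (mat2 p q r s)" and "cnj p * q = 0"
  shows "\<exists>(c :: complex) (\<theta> :: real) (a :: nat).
           cmod c = 1 \<and> 0 \<le> \<theta> \<and> \<theta> < 2 * pi \<and> a \<in> {0, 1} \<and>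
           mat2 p q r s = cscale c ((if a = 0 then mat 1 else pauliX) ** phase_gate \<theta>)"
  using unitary_mat2_diag_or_antidiag[OF assms]
proof
  assume "q = 0 \<and> r = 0 \<and> cmod p = 1 \<and> cmod s = 1"
  then show ?thesis
    using mat2_diag_eq_phase_gate[of p s] Arg2pi_ge_0 Arg2pi_lt_2pi
    by (intro exI[of _ p] exI[of _ "Arg2pi (s / p)"] exI[of _ "0::nat"]) simp
next
  assume "p = 0 \<and> s = 0 \<and> cmod q = 1 \<and> cmod r = 1"
  then show ?thesis
    using mat2_antidiag_eq_pauliX_phase_gate[of q r] Arg2pi_ge_0 Arg2pi_lt_2pi
    by (intro exI[of _ r] exI[of _ "Arg2pi (q / r)"] exI[of _ "1::nat"]) simp
qed

theorem lemma30:
  fixes M M' :: "real set" and U :: qmat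
  assumes "M \<subseteq> {0..<pi}" and "M' \<subseteq> {0..<pi}"
    and "\<exists>a b. a \<in> M \<and> b \<in> M \<and> a \<noteq> b"
    and "\<exists>a b. a \<in> M' \<and> b \<in> M' \<and> a \<noteq> b"
    and "unitary U"
    and "\<exists>f :: real \<Rightarrow> real.
           (\<forall>\<phi>\<in>M. U ** Eq \<phi> ** adj U = Eq (f \<phi>) \<or> U ** Eq \<phi> ** adj U = - Eq (f \<phi>))
           \<and> (\<lambda>\<phi>. mod_pi (f \<phi>)) ` M = M'"
  shows "\<exists>(c :: complex) (\<theta> :: real) (a :: nat).
           cmod c = 1 \<and> 0 \<le> \<theta> \<and> \<theta> < 2 * pi \<and> a \<in> {0, 1} \<and>
           U = cscale c ((if a = 0 then mat 1 else pauliX) ** phase_gate \<theta>)"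
proof -
  obtain f where conj: "\<forall>\<phi>\<in>M. U ** Eq \<phi> ** adj U = Eq (f \<phi>) \<or> U ** Eq \<phi> ** adj U = - Eq (f \<phi>)"
    using assms(6) by blast
  obtain a b where ab: "a \<in> M" "b \<in> M" "a \<noteq> b"
    using assms(3) by blast
  obtain p q r s where U: "U = mat2 p q r s"
    by (rule qmat_mat2_cases)
  have Re_eq_0: "Re (cnj p * q * cis \<phi>) = 0" if "\<phi> \<in> M" for \<phi>
    using conj that unfolding U by (intro conj_Eq_eq_pm_Eq_imp_Re_eq_0[of _ _ _ _ _ "f \<phi>"]) auto
  have "sin (a - b) \<noteq> 0"
    using ab assms(1) by (intro sin_diff_neq_0) auto
  then have "cnj p * q = 0"
    using Re_eq_0[OF ab(1)] Re_eq_0[OF ab(2)] by (rule Re_mult_cis_eq_0_imp_eq_0)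
  with assms(5) show ?thesis
    unfolding U by (rule unitary_mat2_eq_phase_pauliX_phase_gate)
qed

end
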